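(* Let $r\ge 2$, $e\ge 1$ and $0\le p\le\lfloor re/2\rfloor$ be integers, and let $Q$ be a generic binary form of degree $r$ (i.e. with indeterminate coefficients). Then the transvectant $(Q^e,Q^e)_{2p}$ is not identically zero.
   Context: For binary forms $A(x_0,x_1)$, $B(x_0,x_1)$ of degrees $a,b$ and an integer $k\ge0$, the $k$-th transvectant is $(A,B)_k=\frac{(a-k)!\,(b-k)!}{a!\,b!}\bigl[\Omega^k A(x_0,x_1)B(y_0,y_1)\bigr]_{\underline{y}:=\underline{x}}$, where $\Omega=\frac{\partial^2}{\partial x_0\partial y_1}-\frac{\partial^2}{\partial x_1\partial y_0}$ (Cayley's Omega operator); it is a binary form of degree $a+b-2k$. *)

theory Defs
  imports "HOL-Computational_Algebra.Polynomial" "HOL-Library.Poly_Mapping"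
begin

text \<open>A binary form of degree d,
  F(x0,x1) = sum_{i<=d} c_i x0^(d-i) x1^i, is represented by the pair (d, f)
  where f = sum_i c_i t^i is its dehomogenisation (t = x1/x0), a univariate
  polynomial of degree at most d.  Then F = x0^d f(x1/x0).\<close>

type_synonym 'a bform = "nat \<times> 'a poly"

text \<open>Partial derivatives: d/dx1 F = x0^(d-1) f'(t) and
  d/dx0 F = x0^(d-1) (d f(t) - t f'(t)).\<close>

definition bf_dx0 :: "'a::{comm_semiring_1,semiring_no_zero_divisors,comm_ring} bform \<Rightarrow> 'a bform" where
  "bf_dx0 F = (fst F - 1, smult (of_nat (fst F)) (snd F) - pCons 0 (pderiv (snd F)))"

definition bf_dx1 :: "'a::{comm_semiring_1,semiring_no_zero_divisors} bform \<Rightarrow> 'a bform" where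
  "bf_dx1 F = (fst F - 1, pderiv (snd F))"

definition bf_power :: "'a::comm_semiring_1 bform \<Rightarrow> nat \<Rightarrow> 'a bform" where
  "bf_power F e = (fst F * e, (snd F) ^ e)"

text \<open>[Omega^k A(x)B(y)]_{y:=x}, with Omega = d^2/dx0 dy1 - d^2/dx1 dy0, so
  Omega^k = sum_j (-1)^j (k choose j) dx0^(k-j) dx1^j dy0^j dy1^(k-j).
  The result is a form of degree a+b-2k.\<close>

definition omega_bracket :: "nat \<Rightarrow> 'a::idom bform \<Rightarrow> 'a bform \<Rightarrow> 'a bform" where
  "omega_bracket k A B = (fst A + fst B - 2 * k,
     (\<Sum>j\<le>k. smult ((-1) ^ j * of_nat (k choose j))
        (snd ((bf_dx0 ^^ (k - j)) ((bf_dx1 ^^ j) A)) *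
         snd ((bf_dx0 ^^ j) ((bf_dx1 ^^ (k - j)) B)))))"

definition transvectant ::
  "nat \<Rightarrow> (('v::linorder \<Rightarrow>\<^sub>0 nat) \<Rightarrow>\<^sub>0 'k::linordered_field) bform \<Rightarrow> (('v \<Rightarrow>\<^sub>0 nat) \<Rightarrow>\<^sub>0 'k) bform
     \<Rightarrow> (('v \<Rightarrow>\<^sub>0 nat) \<Rightarrow>\<^sub>0 'k) bform" where
  "transvectant k A B =
     (let c = (fact (fst A - k) * fact (fst B - k)) / (fact (fst A) * fact (fst B)) :: 'k
      in (fst (omega_bracket k A B), smult (Poly_Mapping.single 0 c) (snd (omega_bracket k A B))))"

text \<open>The generic binary form of degree r: Q = sum_{i<=r} a_i x0^(r-i) x1^i whose
  coefficients a_0,...,a_r are independent indeterminates over the rationals.\<close>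

definition generic_bform :: "nat \<Rightarrow> ((nat \<Rightarrow>\<^sub>0 nat) \<Rightarrow>\<^sub>0 rat) bform" where
  "generic_bform r = (r, \<Sum>i\<le>r. monom (Poly_Mapping.single (Poly_Mapping.single i 1) 1) i)"

end

(* Specialise the coefficients of Q so that Q becomes x0^(r-2h) (x0^2 + x1^2)^h with h = r div 2 >= 1.
   Then Q^e dehomogenises to (1 + t^2)^N, N = h e, whose coefficients
   are binomial coefficients at even powers of t and vanish at odd ones.  The coefficient of the top
   power of x0 in Omega^(2p) Q^e(x) Q^e(y) is a sum over j of (-1)^j times products of nonnegative
   numbers with the j-th and (2p-j)-th coefficients of (1 + t^2)^N.  Only even j contribute, so no
   cancellation occurs, and the term j = 2 min(p, N) is positive.  So the specialised transvectant
   is nonzero, hence so is the generic one. *)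

theory Submission
  imports Defs
begin

definition monomial_value :: "('v \<Rightarrow> 'a::comm_semiring_1) \<Rightarrow> ('v \<Rightarrow>\<^sub>0 nat) \<Rightarrow> 'a" where
  "monomial_value x m = (\<Prod>v\<in>Poly_Mapping.keys m. x v ^ Poly_Mapping.lookup m v)"

definition insertion :: "('v \<Rightarrow> 'a::comm_semiring_1) \<Rightarrow> (('v \<Rightarrow>\<^sub>0 nat) \<Rightarrow>\<^sub>0 'a) \<Rightarrow> 'a" where
  "insertion x p = (\<Sum>m\<in>Poly_Mapping.keys p. Poly_Mapping.lookup p m * monomial_value x m)"

lemma monomial_value_eq_prod_superset:
  assumes "finite S" "Poly_Mapping.keys m \<subseteq> S"
  shows "monomial_value x m = (\<Prod>v\<in>S. x v ^ Poly_Mapping.lookup m v)"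
  unfolding monomial_value_def
  by (rule prod.mono_neutral_left) (use assms in \<open>auto simp: in_keys_iff\<close>)

lemma monomial_value_0 [simp]: "monomial_value x 0 = 1"
  by (simp add: monomial_value_def)

lemma monomial_value_add: "monomial_value x (m + m') = monomial_value x m * monomial_value x m'"
proof -
  let ?S = "Poly_Mapping.keys m \<union> Poly_Mapping.keys m'"
  have "monomial_value x (m + m') = (\<Prod>v\<in>?S. x v ^ Poly_Mapping.lookup (m + m') v)"
    by (rule monomial_value_eq_prod_superset) (auto simp: keys_add)
  also have "\<dots> = (\<Prod>v\<in>?S. x v ^ Poly_Mapping.lookup m v * x v ^ Poly_Mapping.lookup m' v)"
    by (simp add: lookup_add power_add)
  also have "\<dots> = monomial_value x m * monomial_value x m'"
    by (simp add: prod.distrib monomial_value_eq_prod_superset[of ?S])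
  finally show ?thesis .
qed

lemma insertion_eq_sum_superset:
  assumes "finite S" "Poly_Mapping.keys p \<subseteq> S"
  shows "insertion x p = (\<Sum>m\<in>S. Poly_Mapping.lookup p m * monomial_value x m)"
  unfolding insertion_def
  by (rule sum.mono_neutral_left) (use assms in \<open>auto simp: in_keys_iff\<close>)

lemma insertion_0 [simp]: "insertion x 0 = 0"
  by (simp add: insertion_def)

lemma insertion_add: "insertion x (p + q) = insertion x p + insertion x q"
proof -
  let ?S = "Poly_Mapping.keys p \<union> Poly_Mapping.keys q"
  have "insertion x (p + q) = (\<Sum>m\<in>?S. Poly_Mapping.lookup (p + q) m * monomial_value x m)"
    by (rule insertion_eq_sum_superset) (auto simp: keys_add)
  also have "\<dots> = (\<Sum>m\<in>?S. Poly_Mapping.lookup p m * monomial_value x m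
                           + Poly_Mapping.lookup q m * monomial_value x m)"
    by (simp add: lookup_add algebra_simps)
  also have "\<dots> = insertion x p + insertion x q"
    by (simp add: sum.distrib insertion_eq_sum_superset[of ?S])
  finally show ?thesis .
qed

lemma insertion_sum: "insertion x (sum f A) = (\<Sum>a\<in>A. insertion x (f a))"
  by (induction A rule: infinite_finite_induct) (auto simp: insertion_add)

lemma insertion_single: "insertion x (Poly_Mapping.single m c) = c * monomial_value x m"
  by (subst insertion_eq_sum_superset[of "{m}"]) (auto simp: lookup_single)

lemma insertion_var: "insertion x (Poly_Mapping.single (Poly_Mapping.single v 1) 1) = x v"
  by (simp add: insertion_single monomial_value_def lookup_single)

lemma sum_single_lookup: "(\<Sum>m\<in>Poly_Mapping.keys p. Poly_Mapping.single m (Poly_Mapping.lookup p m)) = p"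
  by (rule poly_mapping_eqI) (auto simp: lookup_sum lookup_single when_def in_keys_iff)

lemma insertion_mult: "insertion x (p * q) = insertion x p * insertion x q"
proof -
  have "p * q = (\<Sum>m\<in>Poly_Mapping.keys p. \<Sum>m'\<in>Poly_Mapping.keys q.
                   Poly_Mapping.single (m + m') (Poly_Mapping.lookup p m * Poly_Mapping.lookup q m'))"
    by (subst (1 2) sum_single_lookup[symmetric]) (simp add: sum_product mult_single)
  then have "insertion x (p * q) = (\<Sum>m\<in>Poly_Mapping.keys p. \<Sum>m'\<in>Poly_Mapping.keys q.
               (Poly_Mapping.lookup p m * monomial_value x m) * (Poly_Mapping.lookup q m' * monomial_value x m'))"
    by (simp add: insertion_sum insertion_single monomial_value_add algebra_simps)
  also have "\<dots> = insertion x p * insertion x q"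
    by (simp add: insertion_def sum_product)
  finally show ?thesis .
qed

lemma insertion_1 [simp]: "insertion x 1 = 1"
  by (metis insertion_single monomial_value_0 mult_1 single_one)

lemma insertion_of_nat [simp]: "insertion x (of_nat n) = of_nat n"
  by (induction n) (auto simp: insertion_add)

lemma insertion_prod: "insertion x (prod f A) = (\<Prod>a\<in>A. insertion x (f a))"
  by (induction A rule: infinite_finite_induct) (auto simp: insertion_mult)

lemma insertion_power: "insertion x (p ^ n) = insertion x p ^ n"
  by (induction n) (auto simp: insertion_mult)

lemma insertion_uminus:
  fixes p :: "('v \<Rightarrow>\<^sub>0 nat) \<Rightarrow>\<^sub>0 'a::comm_ring_1"
  shows "insertion x (- p) = - insertion x p"
  using insertion_add[of x p "- p"] by (simp add: add.commute eq_neg_iff_add_eq_0)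

lemma map_poly_insertion_mult:
  "map_poly (insertion x) (p * q) = map_poly (insertion x) p * map_poly (insertion x) q"
  by (rule poly_eqI) (simp add: coeff_map_poly coeff_mult insertion_sum insertion_mult)

lemma map_poly_insertion_power:
  "map_poly (insertion x) (p ^ n) = map_poly (insertion x) p ^ n"
  by (induction n) (simp_all add: map_poly_insertion_mult)

lemma bf_dx1_funpow: "(bf_dx1 ^^ j) F = (fst F - j, (pderiv ^^ j) (snd F))"
  by (induction j) (auto simp: bf_dx1_def)

lemma fst_bf_dx0_funpow: "fst ((bf_dx0 ^^ m) F) = fst F - m"
  by (induction m) (simp_all add: bf_dx0_def)

lemma coeff_0_bf_dx0_funpow:
  fixes F :: "'a::idom bform"
  shows "coeff (snd ((bf_dx0 ^^ m) F)) 0 = (\<Prod>i<m. of_nat (fst F - i)) * coeff (snd F) 0"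
proof (induction m)
  case (Suc m)
  then show ?case
    by (simp add: bf_dx0_def[of "(bf_dx0 ^^ m) F"] fst_bf_dx0_funpow coeff_pCons_0 mult_ac)
qed simp

lemma pochhammer_1_eq_fact: "pochhammer (1::'a::comm_semiring_1) n = of_nat (fact n)"
  by (metis of_nat_1 pochhammer_of_nat pochhammer_fact)

lemma coeff_0_omega_bracket:
  fixes f g :: "'a::idom poly"
  shows "coeff (snd (omega_bracket k (a, f) (b, g))) 0 =
    (\<Sum>j\<le>k. (-1) ^ j * of_nat (k choose j) *
       ((\<Prod>i<k - j. of_nat (a - j - i)) * of_nat (fact j) * coeff f j) *
       ((\<Prod>i<j. of_nat (b - (k - j) - i)) * of_nat (fact (k - j)) * coeff g (k - j)))"
  by (simp add: omega_bracket_def coeff_sum coeff_mult_0 coeff_0_bf_dx0_funpow bf_dx1_funpow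
      coeff_higher_pderiv pochhammer_1_eq_fact mult_ac)

lemma insertion_coeff_0_omega_bracket:
  fixes f g :: "(('v::linorder \<Rightarrow>\<^sub>0 nat) \<Rightarrow>\<^sub>0 'a::idom) poly"
  shows "insertion x (coeff (snd (omega_bracket k (a, f) (b, g))) 0) =
    coeff (snd (omega_bracket k (a, map_poly (insertion x) f) (b, map_poly (insertion x) g))) 0"
  by (simp add: coeff_0_omega_bracket coeff_map_poly insertion_sum insertion_mult insertion_power
      insertion_uminus insertion_prod)

lemma coeff_0_omega_bracket_pos:
  fixes f g :: "'a::linordered_idom poly"
  assumes "even k" "k \<le> a" "k \<le> b"
    and f_nonneg: "\<And>j. coeff f j \<ge> 0" and g_nonneg: "\<And>j. coeff g j \<ge> 0"
    and f_odd: "\<And>j. odd j \<Longrightarrow> coeff f j = 0"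
    and "j0 \<le> k" "coeff f j0 > 0" "coeff g (k - j0) > 0"
  shows "coeff (snd (omega_bracket k (a, f) (b, g))) 0 > 0"
proof -
  define T where "T = (\<lambda>j. (-1) ^ j * of_nat (k choose j) *
       ((\<Prod>i<k - j. of_nat (a - j - i)) * of_nat (fact j) * coeff f j) *
       ((\<Prod>i<j. of_nat (b - (k - j) - i)) * of_nat (fact (k - j)) * coeff g (k - j)) :: 'a)"
  have "T j \<ge> 0" for j
  proof (cases "even j")
    case True
    then show ?thesis
      unfolding T_def using f_nonneg g_nonneg by (auto intro!: mult_nonneg_nonneg prod_nonneg)
  qed (simp add: T_def f_odd)
  moreover have "T j0 > 0"
  proof -
    have "even j0"
      using f_odd \<open>coeff f j0 > 0\<close> by fastforce
    moreover have "(\<Prod>i<k - j0. of_nat (a - j0 - i) :: 'a) > 0"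
      using \<open>k \<le> a\<close> by (intro prod_pos) (simp only: of_nat_0_less_iff, auto)
    moreover have "(\<Prod>i<j0. of_nat (b - (k - j0) - i) :: 'a) > 0"
      using \<open>k \<le> b\<close> \<open>j0 \<le> k\<close> by (intro prod_pos) (simp only: of_nat_0_less_iff, auto)
    ultimately show ?thesis
      unfolding T_def using assms by (auto intro!: mult_pos_pos)
  qed
  ultimately have "(\<Sum>j\<le>k. T j) > 0"
    using \<open>j0 \<le> k\<close> by (intro sum_pos2[of _ j0]) auto
  then show ?thesis
    by (simp add: coeff_0_omega_bracket T_def)
qed

lemma coeff_1_0_1_power:
  "coeff ([:1, 0, 1:] ^ N :: 'a::comm_semiring_1 poly) j =
     (if even j then of_nat (N choose (j div 2)) else 0)"
proof (induction N arbitrary: j)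
  case (Suc N)
  have "coeff ([:1, 0, 1:] ^ Suc N :: 'a poly) j =
          coeff ([:1, 0, 1:] ^ N :: 'a poly) j + (if j < 2 then 0 else coeff ([:1, 0, 1:] ^ N :: 'a poly) (j - 2))"
    by (cases j; cases "j - 1") (auto simp: coeff_pCons)
  then show ?case
    by (cases j; cases "j - 1") (auto simp: Suc add.commute)
qed (auto simp: coeff_1 binomial_eq_0 elim!: evenE)

lemma map_poly_insertion_generic_bform:
  assumes "degree h \<le> r"
  shows "map_poly (insertion (coeff h)) (snd (generic_bform r)) = h"
proof (rule poly_eqI)
  fix i
  show "coeff (map_poly (insertion (coeff h)) (snd (generic_bform r))) i = coeff h i"
    using assms insertion_var[of "coeff h" i]
    by (auto simp: generic_bform_def coeff_map_poly coeff_sum coeff_monom coeff_eq_0)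
qed

theorem mainTheorem4:
  fixes r e p :: nat
  assumes "r \<ge> 2" and "e \<ge> 1" and "p \<le> (r * e) div 2"
  shows "snd (transvectant (2 * p) (bf_power (generic_bform r) e) (bf_power (generic_bform r) e)) \<noteq> 0"
proof -
  define h where "h = r div 2"
  define x where "x = coeff ([:1, 0, 1:] ^ h :: rat poly)"
  define n where "n = r * e"
  define G where "G = snd (generic_bform r) ^ e"
  define P where "P = snd (omega_bracket (2 * p) (n, G) (n, G))"
  have Q_power: "bf_power (generic_bform r) e = (n, G)"
    by (simp add: bf_power_def generic_bform_def n_def G_def)
  have "degree ([:1, 0, 1:] ^ h :: rat poly) \<le> r"
    using degree_power_le[of "[:1, 0, 1:] :: rat poly" h] by (simp add: h_def)
  then have specialise: "map_poly (insertion x) G = [:1, 0, 1:] ^ (h * e)"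
    by (simp add: x_def G_def map_poly_insertion_power map_poly_insertion_generic_bform power_mult)
  have "r \<le> 4 * h"
    using assms(1) unfolding h_def by linarith
  then have "r * e \<le> 4 * h * e"
    by simp
  then have "p \<le> 2 * (h * e)"
    using assms(3) by linarith
  then have "coeff (snd (omega_bracket (2 * p) (n, [:1, 0, 1:] ^ (h * e)) (n, [:1, 0, 1:] ^ (h * e)))) 0 > (0::rat)"
    using assms by (intro coeff_0_omega_bracket_pos[where ?j0.0 = "2 * min p (h * e)"])
      (auto simp: coeff_1_0_1_power n_def)
  then have "insertion x (coeff P 0) > 0"
    by (simp add: P_def insertion_coeff_0_omega_bracket specialise)
  then have "P \<noteq> 0"
    by auto
  moreover have "Poly_Mapping.single 0 ((fact (n - 2 * p) * fact (n - 2 * p)) / (fact n * fact n) :: rat) \<noteq> 0"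
    by (metis lookup_single_eq lookup_zero divide_eq_0_iff fact_nonzero mult_eq_0_iff)
  ultimately show ?thesis
    by (simp add: Q_power transvectant_def Let_def P_def)
qed

end
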